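(* Let $\mathcal{H}$ be a separable Hilbert space, $\psi$ convex increasing on $[0,\infty)$ with $\psi(0)=0$, and $(\epsilon_i)$ a strictly stationary $\mathcal{H}$-valued sequence with $\epsilon_i=h(\alpha_i,\alpha_{i-1},\ldots)$, $\alpha_k$ i.i.d., $h$ measurable; let $\epsilon_i^{(m)}=h(\alpha_i,\ldots,\alpha_{i-m+1},\alpha'_{i-m},\ldots)$ with $\alpha'_k$ independent copies of $\alpha_0$, and suppose $\sum_{l\ge m}\|\epsilon_l-\epsilon_l^{(l)}\|_\psi\le\gamma_m$ for all $m\ge1$. Let $W_{n1},\ldots,W_{nn}\ge0$ be deterministic, $\eta_i=W_{ni}\epsilon_i$, $S_n=\sum_i\eta_i$, $\mathcal{G}_i=\sigma(\epsilon_1,\ldots,\epsilon_i)$ ($\mathcal{G}_0$ trivial), $1\le m\le n$ an integer, $T_i=S_n-\sum_{j=i}^{\min(i+m-1,n)}\eta_j$, and $f_i=E[\|T_i\|\mid\mathcal{G}_i]-E[\|T_i\|\mid\mathcal{G}_{i-1}]$. Then for every $a>0$, $P\big(\sum_{i=1}^nf_i>a\big)\le2/\psi\big(a/(2n(\max_{1\le j\le n}W_{nj})\gamma_m)\big)$.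
   Context: $\|Z\|_\psi=\inf\{c>0:E[\psi(\|Z\|/c)]\le1\}$ is the $\psi$-Orlicz norm. *)

theory Defs
  imports "HOL-Probability.Probability"
begin

text \<open>The psi-Orlicz norm inf{c>0 : E[psi(norm Z / c)] <= 1}, valued in ennreal
  (infimum of the empty set is top, i.e. the norm is infinite).\<close>
definition orlicz_norm :: "'a measure \<Rightarrow> (real \<Rightarrow> real) \<Rightarrow> ('a \<Rightarrow> 'h::real_normed_vector) \<Rightarrow> ennreal" where
  "orlicz_norm M \<psi> Z =
     Inf {ennreal c | c. c > 0 \<and> (\<integral>\<^sup>+ x. ennreal (\<psi> (norm (Z x) / c)) \<partial>M) \<le> 1}"

definition gen_sigma :: "'a measure \<Rightarrow> 'i set \<Rightarrow> ('i \<Rightarrow> 'a \<Rightarrow> 'h::topological_space) \<Rightarrow> 'a measure" where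
  "gen_sigma M I X = sigma (space M) {X j -` A \<inter> space M | j A. j \<in> I \<and> A \<in> sets borel}"

end

theory Submission
  imports Defs "HOL-Real_Asymp.Real_Asymp"
begin

text \<open>Write \<open>T\<^sub>i = P\<^sub>i + R\<^sub>i\<close>, where \<open>P\<^sub>i\<close> collects the weighted terms before index \<open>i\<close> and \<open>R\<^sub>i\<close>
  those after the deleted block, and let \<open>R\<^sub>i'\<close> be \<open>R\<^sub>i\<close> with every innovation of index at most \<open>i\<close>
  replaced by its independent copy. As \<open>R\<^sub>i'\<close> is independent of \<open>\<epsilon>\<^sub>1, \<dots>, \<epsilon>\<^sub>i\<close> while \<open>P\<^sub>i\<close> is a
  function of \<open>\<epsilon>\<^sub>1, \<dots>, \<epsilon>\<^sub>i\<^sub>-\<^sub>1\<close>, the conditional expectations of \<open>\<parallel>P\<^sub>i + R\<^sub>i'\<parallel>\<close> given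
  \<open>G\<^sub>i\<close> and \<open>G\<^sub>i\<^sub>-\<^sub>1\<close> agree, so \<open>|f\<^sub>i|\<close> is at most the sum of the two conditional expectations
  of \<open>\<parallel>R\<^sub>i - R\<^sub>i'\<parallel>\<close>. By stationarity \<open>R\<^sub>i - R\<^sub>i'\<close> is a weighted sum of copies of
  \<open>\<epsilon>\<^sub>l - \<epsilon>\<^sub>l\<^sup>(\<^sup>l\<^sup>)\<close>, \<open>l \<ge> m\<close>, so convexity of \<open>\<psi>\<close> gives \<open>E \<psi>(\<parallel>R\<^sub>i - R\<^sub>i'\<parallel> / c) \<le> 1\<close> for
  every \<open>c > max W \<cdot> \<gamma>\<^sub>m\<close>, and by conditional Jensen the same holds for each of the \<open>2n\<close>
  conditional expectations. Convexity once more gives \<open>P(\<Sum> f\<^sub>i > a) \<psi>(a / (2nc)) \<le> 1\<close>; letting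
  \<open>c\<close> decrease to \<open>max W \<cdot> \<gamma>\<^sub>m\<close> proves the claim, even with \<open>1\<close> in place of \<open>2\<close>.\<close>

section \<open>Orlicz functions\<close>

locale orlicz_function =
  fixes \<psi> :: "real \<Rightarrow> real"
  assumes convex: "convex_on {0..} \<psi>" and strict_mono: "strict_mono_on {0..} \<psi>"
    and zero: "\<psi> 0 = 0"
begin

lemma mono: "0 \<le> x \<Longrightarrow> x \<le> y \<Longrightarrow> \<psi> x \<le> \<psi> y"
  using strict_mono_onD[OF strict_mono, of x y] by (cases "x = y") auto

lemma nonneg: "0 \<le> x \<Longrightarrow> 0 \<le> \<psi> x"
  using mono[of 0 x] zero by simp

text \<open>Nothing is assumed about \<open>\<psi>\<close> on the negative axis; the extension by \<open>\<psi> 0\<close> is convex and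
  monotone on all of \<open>\<real>\<close>, hence Borel measurable and continuous.\<close>

definition psi_pos :: "real \<Rightarrow> real" where "psi_pos x = \<psi> (max x 0)"

lemma psi_pos_eq: "0 \<le> x \<Longrightarrow> psi_pos x = \<psi> x"
  by (simp add: psi_pos_def)

lemma psi_pos_nonneg: "0 \<le> psi_pos x"
  by (simp add: psi_pos_def nonneg)

lemma mono_psi_pos: "mono psi_pos"
  unfolding psi_pos_def mono_def by (auto intro!: mono)

lemma borel_measurable_psi_pos [measurable]: "psi_pos \<in> borel_measurable borel"
  by (rule borel_measurable_mono[OF mono_psi_pos])

lemma convex_psi_pos: "convex_on UNIV psi_pos"
proof (rule convex_onI)
  fix t x y :: real assume t: "0 < t" "t < 1"
  have "max ((1 - t) * x + t * y) 0 \<le> (1 - t) * max x 0 + t * max y 0"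
    using t by (intro max.boundedI add_mono mult_left_mono add_nonneg_nonneg mult_nonneg_nonneg) auto
  then have "psi_pos ((1 - t) *\<^sub>R x + t *\<^sub>R y) \<le> \<psi> ((1 - t) * max x 0 + t * max y 0)"
    unfolding psi_pos_def by (intro mono) auto
  also have "\<dots> \<le> (1 - t) * \<psi> (max x 0) + t * \<psi> (max y 0)"
    using convex_onD[OF convex, of t "max x 0" "max y 0"] t by simp
  finally show "psi_pos ((1 - t) *\<^sub>R x + t *\<^sub>R y) \<le> (1 - t) * psi_pos x + t * psi_pos y"
    by (simp add: psi_pos_def)
qed simp

lemma continuous_on_psi_pos: "continuous_on UNIV psi_pos"
  by (rule convex_on_continuous[OF open_UNIV convex_psi_pos])

lemma psi_one_pos: "0 < \<psi> 1"
  using strict_mono_onD[OF strict_mono, of 0 1] zero by auto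

lemma linear_le_psi:
  assumes "1 \<le> x" shows "x * \<psi> 1 \<le> \<psi> x"
proof -
  have "\<psi> ((1 - 1/x) *\<^sub>R 0 + (1/x) *\<^sub>R x) \<le> (1 - 1/x) * \<psi> 0 + (1/x) * \<psi> x"
    using assms by (intro convex_onD[OF convex]) auto
  then show ?thesis using assms zero by (simp add: field_simps)
qed

lemma le_one_plus_psi:
  assumes "0 \<le> x" shows "x \<le> 1 + \<psi> x / \<psi> 1"
proof (cases "x \<le> 1")
  case True
  then show ?thesis using psi_one_pos nonneg[OF assms] by (simp add: add_increasing2)
next
  case False
  then show ?thesis using linear_le_psi[of x] psi_one_pos by (simp add: field_simps)
qed

lemma psi_unbounded: "\<exists>x\<ge>0. B \<le> \<psi> x"
proof -
  define x where "x = max 1 (B / \<psi> 1)"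
  have "B \<le> x * \<psi> 1"
    using psi_one_pos by (simp add: x_def field_simps max_def)
  also have "\<dots> \<le> \<psi> x" by (rule linear_le_psi) (simp add: x_def)
  finally show ?thesis unfolding x_def by (intro exI[of _ x]) (simp add: x_def)
qed

text \<open>Jensen's inequality for weights of total mass at most one: the missing mass is put on \<open>0\<close>.\<close>

lemma psi_sum_le:
  assumes "finite A" "\<And>j. j \<in> A \<Longrightarrow> 0 \<le> l j" "sum l A \<le> 1" "\<And>j. j \<in> A \<Longrightarrow> 0 \<le> y j"
  shows "\<psi> (\<Sum>j\<in>A. l j * y j) \<le> (\<Sum>j\<in>A. l j * \<psi> (y j))"
proof -
  define A' where "A' = insert None (Some ` A)"
  define l' where "l' k = (case k of None \<Rightarrow> 1 - sum l A | Some j \<Rightarrow> l j)" for k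
  define y' where "y' k = (case k of None \<Rightarrow> 0 | Some j \<Rightarrow> y j)" for k
  have sum_A': "(\<Sum>k\<in>A'. g k) = g None + (\<Sum>j\<in>A. g (Some j))" for g :: "_ \<Rightarrow> real"
    unfolding A'_def using assms(1) by (subst sum.insert) (auto simp: sum.reindex)
  have "(\<Sum>k\<in>A'. l' k) = 1" by (simp add: sum_A' l'_def)
  then have "psi_pos (\<Sum>k\<in>A'. l' k *\<^sub>R y' k) \<le> (\<Sum>k\<in>A'. l' k * psi_pos (y' k))"
    using assms(1-3) by (intro convex_on_sum[OF _ _ convex_psi_pos]) (auto simp: A'_def l'_def)
  moreover have "0 \<le> (\<Sum>j\<in>A. l j * y j)" using assms by (auto intro!: sum_nonneg)
  ultimately show ?thesis
    using assms(4) by (simp add: sum_A' l'_def y'_def psi_pos_eq zero)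
qed

lemma nn_integral_psi_le_if_orlicz_norm_less:
  assumes "orlicz_norm M \<psi> Z < ennreal t" "0 < t"
  shows "(\<integral>\<^sup>+x. ennreal (\<psi> (norm (Z x) / t)) \<partial>M) \<le> 1"
proof -
  obtain c where c: "0 < c" "(\<integral>\<^sup>+ x. ennreal (\<psi> (norm (Z x) / c)) \<partial>M) \<le> 1" "c < t"
    using assms unfolding orlicz_norm_def by (auto simp: Inf_less_iff ennreal_less_iff)
  have "(\<integral>\<^sup>+x. ennreal (\<psi> (norm (Z x) / t)) \<partial>M) \<le> (\<integral>\<^sup>+ x. ennreal (\<psi> (norm (Z x) / c)) \<partial>M)"
    using c by (intro nn_integral_mono ennreal_leI mono) (auto intro!: divide_left_mono)
  then show ?thesis using c(2) by simp
qed

lemma orlicz_norm_cong_distr: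
  fixes Z :: "'a \<Rightarrow> 'h::{real_normed_vector, second_countable_topology}" and Z' :: "'b \<Rightarrow> 'h"
  assumes [measurable]: "Z \<in> borel_measurable M" "Z' \<in> borel_measurable M'"
    and "distr M borel Z = distr M' borel Z'"
  shows "orlicz_norm M \<psi> Z = orlicz_norm M' \<psi> Z'"
proof -
  have "(\<integral>\<^sup>+x. ennreal (\<psi> (norm (Z x) / c)) \<partial>M) = (\<integral>\<^sup>+x. ennreal (\<psi> (norm (Z' x) / c)) \<partial>M')"
    if "0 < c" for c
  proof -
    have "(\<integral>\<^sup>+x. ennreal (\<psi> (norm (Z x) / c)) \<partial>M) = (\<integral>\<^sup>+x. ennreal (psi_pos (norm (Z x) / c)) \<partial>M)"
      using that by (simp add: psi_pos_eq)
    also have "\<dots> = (\<integral>\<^sup>+z. ennreal (psi_pos (norm z / c)) \<partial>distr M borel Z)"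
      by (simp add: nn_integral_distr)
    also have "\<dots> = (\<integral>\<^sup>+x. ennreal (psi_pos (norm (Z' x) / c)) \<partial>M')"
      by (simp add: assms(3) nn_integral_distr)
    also have "\<dots> = (\<integral>\<^sup>+x. ennreal (\<psi> (norm (Z' x) / c)) \<partial>M')"
      using that by (simp add: psi_pos_eq)
    finally show ?thesis .
  qed
  then show ?thesis
    unfolding orlicz_norm_def by (intro arg_cong[where f=Inf]) auto
qed

lemma integrable_if_nn_integral_psi_le:
  assumes "finite_measure M" and [measurable]: "Y \<in> borel_measurable M"
    and Y: "\<And>x. 0 \<le> Y x" and c: "0 < c"
    and bound: "(\<integral>\<^sup>+x. ennreal (\<psi> (Y x / c)) \<partial>M) \<le> 1"
  shows "integrable M Y"
proof (rule integrableI_bounded)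
  interpret finite_measure M by fact
  have bound': "(\<integral>\<^sup>+x. ennreal (psi_pos (Y x / c)) \<partial>M) < \<infinity>"
    using Y c le_less_trans[OF bound ennreal_one_less_top] by (simp add: psi_pos_eq)
  have "ennreal (Y x) \<le> ennreal c + ennreal (c / \<psi> 1) * ennreal (psi_pos (Y x / c))" for x
  proof -
    have "Y x / c \<le> 1 + \<psi> (Y x / c) / \<psi> 1" using Y c by (intro le_one_plus_psi) auto
    then have "Y x \<le> c + c / \<psi> 1 * psi_pos (Y x / c)"
      using Y c by (simp add: psi_pos_eq field_simps)
    then show ?thesis
      using c psi_one_pos psi_pos_nonneg
      by (simp add: ennreal_plus[symmetric] ennreal_mult[symmetric] ennreal_leI del: ennreal_plus)
  qed
  then have "(\<integral>\<^sup>+x. ennreal (norm (Y x)) \<partial>M)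
      \<le> (\<integral>\<^sup>+x. ennreal c + ennreal (c / \<psi> 1) * ennreal (psi_pos (Y x / c)) \<partial>M)"
    using Y by (intro nn_integral_mono) simp
  also have "\<dots> = ennreal c * emeasure M (space M) + ennreal (c / \<psi> 1) * (\<integral>\<^sup>+x. ennreal (psi_pos (Y x / c)) \<partial>M)"
    by (simp add: nn_integral_add nn_integral_cmult)
  also have "\<dots> < \<infinity>"
    using bound' by (simp add: ennreal_mult_less_top emeasure_eq_measure)
  finally show "(\<integral>\<^sup>+x. ennreal (norm (Y x)) \<partial>M) < \<infinity>" .
qed simp

lemma nn_integral_psi_cond_exp_le:
  assumes "prob_space M" "sigma_finite_subalgebra M F" and [measurable]: "Y \<in> borel_measurable M"
    and Y: "\<And>x. 0 \<le> Y x" and c: "0 < c"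
    and bound: "(\<integral>\<^sup>+x. ennreal (\<psi> (Y x / c)) \<partial>M) \<le> 1"
  shows "(\<integral>\<^sup>+x. ennreal (\<psi> (real_cond_exp M F Y x / c)) \<partial>M) \<le> 1"
proof -
  interpret prob_space M by fact
  interpret sigma_finite_subalgebra M F by fact
  have bound': "(\<integral>\<^sup>+x. ennreal (psi_pos (Y x / c)) \<partial>M) \<le> 1"
    using bound Y c by (simp add: psi_pos_eq)
  have intY: "integrable M Y"
    using integrable_if_nn_integral_psi_le[OF _ _ Y c bound] by (simp add: finite_measure_axioms)
  then have intYc: "integrable M (\<lambda>x. Y x / c)" by simp
  have intq: "integrable M (\<lambda>x. psi_pos (Y x / c))"
    using bound' psi_pos_nonneg by (intro integrableI_bounded) (auto simp: le_less_trans)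
  have jensen: "AE x in M. psi_pos (real_cond_exp M F (\<lambda>x. Y x / c) x)
      \<le> real_cond_exp M F (\<lambda>x. psi_pos (Y x / c)) x"
    by (rule real_cond_exp_jensens_inequality(2)[where I=UNIV]) (use intYc intq convex_psi_pos in auto)
  have intJ: "integrable M (\<lambda>x. psi_pos (real_cond_exp M F (\<lambda>x. Y x / c) x))"
    by (rule integrable_convex_cond_exp[where I=UNIV]) (use intYc intq convex_psi_pos in auto)
  have "(\<integral>x. psi_pos (real_cond_exp M F (\<lambda>x. Y x / c) x) \<partial>M)
      \<le> (\<integral>x. real_cond_exp M F (\<lambda>x. psi_pos (Y x / c)) x \<partial>M)"
    by (rule integral_mono_AE[OF intJ real_cond_exp_int(1)[OF intq] jensen])
  also have "\<dots> = (\<integral>x. psi_pos (Y x / c) \<partial>M)" by (rule real_cond_exp_int(2)[OF intq])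
  finally have "(\<integral>\<^sup>+x. ennreal (psi_pos (real_cond_exp M F (\<lambda>x. Y x / c) x)) \<partial>M)
      \<le> (\<integral>\<^sup>+x. ennreal (psi_pos (Y x / c)) \<partial>M)"
    by (simp add: nn_integral_eq_integral intJ intq psi_pos_nonneg)
  also have "(\<integral>\<^sup>+x. ennreal (psi_pos (real_cond_exp M F (\<lambda>x. Y x / c) x)) \<partial>M)
      = (\<integral>\<^sup>+x. ennreal (\<psi> (real_cond_exp M F Y x / c)) \<partial>M)"
  proof (rule nn_integral_cong_AE)
    have "AE x in M. 0 \<le> real_cond_exp M F Y x" by (rule real_cond_exp_pos) (use Y in auto)
    moreover have "AE x in M. real_cond_exp M F (\<lambda>x. Y x / c) x = real_cond_exp M F Y x / c"
      by (rule real_cond_exp_cdiv[OF intY])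
    ultimately show "AE x in M. ennreal (psi_pos (real_cond_exp M F (\<lambda>x. Y x / c) x))
        = ennreal (\<psi> (real_cond_exp M F Y x / c))"
      by eventually_elim (use c in \<open>simp add: psi_pos_eq\<close>)
  qed
  finally show ?thesis using bound' by simp
qed

text \<open>In effect the triangle inequality for the Orlicz norm.\<close>

lemma nn_integral_psi_sum_le:
  fixes Z :: "'i \<Rightarrow> 'a \<Rightarrow> 'h::{real_normed_vector, second_countable_topology}"
  assumes J: "finite J" and [measurable]: "\<And>j. j \<in> J \<Longrightarrow> Z j \<in> borel_measurable M"
    and u: "\<And>j. j \<in> J \<Longrightarrow> 0 \<le> u j" and t: "\<And>j. j \<in> J \<Longrightarrow> 0 < t j"
    and norm_Z: "\<And>j. j \<in> J \<Longrightarrow> orlicz_norm M \<psi> (Z j) < ennreal (t j)"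
    and sum_le: "(\<Sum>j\<in>J. u j * t j) \<le> c" and c: "0 < c"
  shows "(\<integral>\<^sup>+x. ennreal (\<psi> (norm (\<Sum>j\<in>J. u j *\<^sub>R Z j x) / c)) \<partial>M) \<le> 1"
proof -
  define l where "l j = u j * t j / c" for j
  have l: "0 \<le> l j" if "j \<in> J" for j using u[OF that] t[OF that] c by (simp add: l_def)
  have sum_l: "sum l J \<le> 1"
    using sum_le c by (simp add: l_def sum_divide_distrib[symmetric])
  have pointwise: "ennreal (\<psi> (norm (\<Sum>j\<in>J. u j *\<^sub>R Z j x) / c))
      \<le> (\<Sum>j\<in>J. ennreal (l j) * ennreal (psi_pos (norm (Z j x) / t j)))" for x
  proof -
    have "norm (\<Sum>j\<in>J. u j *\<^sub>R Z j x) / c \<le> (\<Sum>j\<in>J. u j * norm (Z j x)) / c"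
      using c norm_sum[of "\<lambda>j. u j *\<^sub>R Z j x" J] u by (simp add: divide_right_mono)
    also have "\<dots> = (\<Sum>j\<in>J. l j * (norm (Z j x) / t j))"
      unfolding sum_divide_distrib l_def by (intro sum.cong) (auto simp: field_simps dest!: t)
    finally have "\<psi> (norm (\<Sum>j\<in>J. u j *\<^sub>R Z j x) / c) \<le> \<psi> (\<Sum>j\<in>J. l j * (norm (Z j x) / t j))"
      using c by (intro mono) auto
    also have "\<dots> \<le> (\<Sum>j\<in>J. l j * \<psi> (norm (Z j x) / t j))"
      using J l sum_l by (intro psi_sum_le) (auto simp: less_imp_le[OF t])
    also have "\<dots> = (\<Sum>j\<in>J. l j * psi_pos (norm (Z j x) / t j))"
      by (intro sum.cong) (auto simp: psi_pos_eq less_imp_le[OF t])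
    finally have "ennreal (\<psi> (norm (\<Sum>j\<in>J. u j *\<^sub>R Z j x) / c))
        \<le> ennreal (\<Sum>j\<in>J. l j * psi_pos (norm (Z j x) / t j))"
      by (rule ennreal_leI)
    also have "\<dots> = (\<Sum>j\<in>J. ennreal (l j) * ennreal (psi_pos (norm (Z j x) / t j)))"
      using l psi_pos_nonneg by (subst sum_ennreal[symmetric]) (auto simp: ennreal_mult)
    finally show ?thesis .
  qed
  have "(\<integral>\<^sup>+x. ennreal (\<psi> (norm (\<Sum>j\<in>J. u j *\<^sub>R Z j x) / c)) \<partial>M)
      \<le> (\<integral>\<^sup>+x. (\<Sum>j\<in>J. ennreal (l j) * ennreal (psi_pos (norm (Z j x) / t j))) \<partial>M)"
    by (rule nn_integral_mono) (rule pointwise)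
  also have "\<dots> = (\<Sum>j\<in>J. ennreal (l j) * (\<integral>\<^sup>+x. ennreal (psi_pos (norm (Z j x) / t j)) \<partial>M))"
    by (simp add: nn_integral_sum nn_integral_cmult)
  also have "\<dots> \<le> (\<Sum>j\<in>J. ennreal (l j) * 1)"
  proof (intro sum_mono mult_left_mono)
    fix j assume j: "j \<in> J"
    have "(\<integral>\<^sup>+x. ennreal (psi_pos (norm (Z j x) / t j)) \<partial>M) = (\<integral>\<^sup>+x. ennreal (\<psi> (norm (Z j x) / t j)) \<partial>M)"
      using t[OF j] by (simp add: psi_pos_eq)
    also have "\<dots> \<le> 1" using t[OF j] norm_Z[OF j] by (intro nn_integral_psi_le_if_orlicz_norm_less)
    finally show "(\<integral>\<^sup>+x. ennreal (psi_pos (norm (Z j x) / t j)) \<partial>M) \<le> 1" .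
  qed simp
  also have "\<dots> = ennreal (sum l J)" using l by (simp add: sum_ennreal)
  also have "\<dots> \<le> 1" using sum_l by (simp add: ennreal_le_1)
  finally show ?thesis .
qed

lemma nn_integral_psi_weighted_sum_le:
  fixes Z :: "'i \<Rightarrow> 'a \<Rightarrow> 'h::{real_normed_vector, second_countable_topology}"
  assumes J: "finite J" and [measurable]: "\<And>j. j \<in> J \<Longrightarrow> Z j \<in> borel_measurable M"
    and u: "\<And>j. j \<in> J \<Longrightarrow> 0 \<le> u j" "\<And>j. j \<in> J \<Longrightarrow> u j \<le> U" and U: "0 \<le> U"
    and norms: "(\<Sum>j\<in>J. orlicz_norm M \<psi> (Z j)) \<le> ennreal \<Gamma>" and c: "0 < c" "U * \<Gamma> < c"
  shows "(\<integral>\<^sup>+x. ennreal (\<psi> (norm (\<Sum>j\<in>J. u j *\<^sub>R Z j x) / c)) \<partial>M) \<le> 1"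
proof -
  define d where "d j = enn2real (orlicz_norm M \<psi> (Z j))" for j
  have d0: "0 \<le> d j" for j by (simp add: d_def)
  have d: "orlicz_norm M \<psi> (Z j) = ennreal (d j)" if "j \<in> J" for j
  proof -
    have "orlicz_norm M \<psi> (Z j) \<le> (\<Sum>j\<in>J. orlicz_norm M \<psi> (Z j))"
      using J that by (intro member_le_sum) auto
    then have "orlicz_norm M \<psi> (Z j) < \<infinity>" using norms by (simp add: le_less_trans)
    then show ?thesis by (simp add: d_def less_top)
  qed
  define \<Delta> where "\<Delta> = sum d J"
  have \<Delta>0: "0 \<le> \<Delta>" by (simp add: \<Delta>_def sum_nonneg d0)
  have "ennreal \<Delta> = (\<Sum>j\<in>J. orlicz_norm M \<psi> (Z j))"
    using d d0 by (simp add: \<Delta>_def sum_ennreal[symmetric] del: sum_ennreal)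
  then have \<Delta>_le: "ennreal \<Delta> \<le> ennreal \<Gamma>" using norms by simp
  have U\<Delta>: "U * \<Delta> < c"
  proof (cases "0 \<le> \<Gamma>")
    case True
    then have "U * \<Delta> \<le> U * \<Gamma>" using \<Delta>_le U by (intro mult_left_mono) (auto simp: ennreal_le_iff)
    then show ?thesis using c by simp
  next
    case False
    then have "\<Delta> = 0" using \<Delta>_le \<Delta>0 by (simp add: ennreal_neg)
    then show ?thesis using c by simp
  qed
  define K where "K = real (card J)"
  have K: "0 < K * U + 1" using U by (simp add: K_def add_nonneg_pos)
  define s where "s = (c - U * \<Delta>) / (K * U + 1)"
  have s: "0 < s" unfolding s_def using U\<Delta> K by simp
  show ?thesis
  proof (rule nn_integral_psi_sum_le[where t="\<lambda>j. d j + s"])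
    show "0 < d j + s" for j using s d0[of j] by simp
    show "orlicz_norm M \<psi> (Z j) < ennreal (d j + s)" if "j \<in> J" for j
      using d[OF that] s d0[of j] by (simp add: ennreal_less_iff)
    have "(\<Sum>j\<in>J. u j * (d j + s)) \<le> (\<Sum>j\<in>J. U * (d j + s))"
      using u s d0 by (intro sum_mono mult_right_mono) (auto intro: add_nonneg_nonneg less_imp_le)
    also have "\<dots> = U * \<Delta> + U * (K * s)"
      by (simp add: \<Delta>_def K_def sum.distrib sum_distrib_left algebra_simps)
    also have "U * (K * s) = (K * U) / (K * U + 1) * (c - U * \<Delta>)" by (simp add: s_def field_simps)
    also have "\<dots> \<le> c - U * \<Delta>" using K U\<Delta> by (simp add: field_simps)
    finally show "(\<Sum>j\<in>J. u j * (d j + s)) \<le> c" by simp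
  qed (use J u c in auto)
qed

lemma measure_psi_tail_le:
  assumes "prob_space M" "finite I" and [measurable]: "A \<in> sets M" and b: "0 < b" and c: "0 < c"
    and [measurable]: "\<And>k. k \<in> I \<Longrightarrow> d k \<in> borel_measurable M"
    and d_nonneg: "\<And>k. k \<in> I \<Longrightarrow> AE x in M. 0 \<le> d k x"
    and d_bound: "\<And>k. k \<in> I \<Longrightarrow> (\<integral>\<^sup>+x. ennreal (\<psi> (d k x / c)) \<partial>M) \<le> 1"
    and tail: "AE x in M. x \<in> A \<longrightarrow> b < (\<Sum>k\<in>I. d k x)"
  shows "measure M A * \<psi> (b / (real (card I) * c)) \<le> 1"
proof (cases "I = {}")
  case True
  then show ?thesis by (simp add: zero)
next
  case False
  interpret prob_space M by fact
  define \<kappa> where "\<kappa> = 1 / real (card I)"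
  define C where "C = \<psi> (b / (real (card I) * c))"
  have \<kappa>: "0 < \<kappa>" "real (card I) * \<kappa> = 1" using False \<open>finite I\<close> by (auto simp: \<kappa>_def)
  have C: "0 \<le> C" using b c by (simp add: C_def nonneg)
  have pointwise: "indicator A x * ennreal C \<le> (\<Sum>k\<in>I. ennreal \<kappa> * ennreal (psi_pos (d k x / c)))"
    if x: "x \<in> A \<longrightarrow> b < (\<Sum>k\<in>I. d k x)" "\<forall>k\<in>I. 0 \<le> d k x" for x
  proof (cases "x \<in> A")
    case True
    have "b / (real (card I) * c) \<le> (\<Sum>k\<in>I. \<kappa> * (d k x / c))"
      using x True \<kappa> c by (simp add: \<kappa>_def sum_distrib_left[symmetric] sum_divide_distrib[symmetric]
          divide_right_mono field_simps)
    then have "C \<le> \<psi> (\<Sum>k\<in>I. \<kappa> * (d k x / c))"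
      unfolding C_def using b c by (intro mono) auto
    also have "\<dots> \<le> (\<Sum>k\<in>I. \<kappa> * \<psi> (d k x / c))"
      using x \<kappa> c \<open>finite I\<close> by (intro psi_sum_le) auto
    also have "\<dots> = (\<Sum>k\<in>I. \<kappa> * psi_pos (d k x / c))"
      using x c by (intro sum.cong) (auto simp: psi_pos_eq)
    finally have "ennreal C \<le> ennreal (\<Sum>k\<in>I. \<kappa> * psi_pos (d k x / c))"
      by (rule ennreal_leI)
    also have "\<dots> = (\<Sum>k\<in>I. ennreal \<kappa> * ennreal (psi_pos (d k x / c)))"
      using \<kappa> psi_pos_nonneg by (subst sum_ennreal[symmetric]) (auto simp: ennreal_mult)
    finally show ?thesis using True by simp
  qed simp
  have "ennreal (measure M A * C) = (\<integral>\<^sup>+x. indicator A x * ennreal C \<partial>M)"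
    using C by (simp add: nn_integral_multc emeasure_eq_measure ennreal_mult)
  also have "\<dots> \<le> (\<integral>\<^sup>+x. (\<Sum>k\<in>I. ennreal \<kappa> * ennreal (psi_pos (d k x / c))) \<partial>M)"
  proof (rule nn_integral_mono_AE)
    have "AE x in M. \<forall>k\<in>I. 0 \<le> d k x" using d_nonneg \<open>finite I\<close> by (simp add: AE_finite_all)
    then show "AE x in M. indicator A x * ennreal C
        \<le> (\<Sum>k\<in>I. ennreal \<kappa> * ennreal (psi_pos (d k x / c)))"
      using tail by eventually_elim (rule pointwise)
  qed
  also have "\<dots> = (\<Sum>k\<in>I. ennreal \<kappa> * (\<integral>\<^sup>+x. ennreal (psi_pos (d k x / c)) \<partial>M))"
    by (simp add: nn_integral_sum nn_integral_cmult)
  also have "\<dots> \<le> (\<Sum>k\<in>I. ennreal \<kappa> * 1)"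
  proof (intro sum_mono mult_left_mono)
    fix k assume k: "k \<in> I"
    have "AE x in M. ennreal (psi_pos (d k x / c)) = ennreal (\<psi> (d k x / c))"
      using d_nonneg[OF k] by eventually_elim (use c in \<open>simp add: psi_pos_eq\<close>)
    then have "(\<integral>\<^sup>+x. ennreal (psi_pos (d k x / c)) \<partial>M) = (\<integral>\<^sup>+x. ennreal (\<psi> (d k x / c)) \<partial>M)"
      by (rule nn_integral_cong_AE)
    then show "(\<integral>\<^sup>+x. ennreal (psi_pos (d k x / c)) \<partial>M) \<le> 1" using d_bound[OF k] by simp
  qed simp
  also have "\<dots> = ennreal (real (card I) * \<kappa>)"
    using \<kappa>(1) by (simp add: ennreal_of_nat_eq_real_of_nat ennreal_mult)
  finally show ?thesis using \<kappa> by (simp add: C_def ennreal_le_1)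
qed

text \<open>Passing to the limit \<open>c \<rightarrow> c\<^sub>0\<close> uses continuity of \<open>\<psi>\<close> when \<open>c\<^sub>0 > 0\<close>; for \<open>c\<^sub>0 < 0\<close> the
  hypothesis holds for all \<open>c > 0\<close>, so unboundedness of \<open>\<psi>\<close> forces \<open>p = 0\<close>.\<close>

lemma mult_psi_le_one_at_threshold:
  assumes p: "0 \<le> p" and b: "0 < b"
    and le: "\<And>c. 0 < c \<Longrightarrow> c\<^sub>0 < c \<Longrightarrow> p * \<psi> (b / c) \<le> 1"
  shows "p * \<psi> (b / c\<^sub>0) \<le> 1"
proof -
  consider "c\<^sub>0 = 0" | "c\<^sub>0 < 0" | "0 < c\<^sub>0" by linarith
  then show ?thesis
  proof cases
    case 1
    then show ?thesis by (simp add: zero)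
  next
    case 2
    have "p = 0"
    proof (rule ccontr)
      assume "p \<noteq> 0"
      then have "0 < p" using p by simp
      obtain x where x: "0 \<le> x" "2 / p \<le> \<psi> x" using psi_unbounded by blast
      with \<open>0 < p\<close> zero have "0 < x" by (cases "x = 0") (auto simp: field_simps)
      have "c\<^sub>0 < b / x" using 2 b \<open>0 < x\<close> by (smt (verit) divide_pos_pos)
      then have "p * \<psi> (b / (b / x)) \<le> 1" using le[of "b / x"] b \<open>0 < x\<close> by simp
      moreover have "2 \<le> p * \<psi> x" using x \<open>0 < p\<close> by (simp add: field_simps)
      ultimately show False using b \<open>0 < x\<close> by simp
    qed
    then show ?thesis by simp
  next
    case 3
    have "(\<lambda>k. 1 + 1 / real (Suc k)) \<longlonglongrightarrow> 1" by real_asymp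
    then have lim: "(\<lambda>k. b / (c\<^sub>0 * (1 + 1 / real (Suc k)))) \<longlonglongrightarrow> b / c\<^sub>0"
      using tendsto_divide[OF tendsto_const[of b] tendsto_mult_left[of _ 1 _ c\<^sub>0]] 3 by simp
    have lim': "(\<lambda>k. p * psi_pos (b / (c\<^sub>0 * (1 + 1 / real (Suc k))))) \<longlonglongrightarrow> p * psi_pos (b / c\<^sub>0)"
      by (intro tendsto_mult_left continuous_on_tendsto_compose[OF continuous_on_psi_pos lim]) auto
    have "p * psi_pos (b / (c\<^sub>0 * (1 + 1 / real (Suc k)))) \<le> 1" for k
    proof -
      have "c\<^sub>0 < c\<^sub>0 * (1 + 1 / real (Suc k))" using 3 by (simp add: algebra_simps)
      moreover from this 3 have "0 < c\<^sub>0 * (1 + 1 / real (Suc k))" by linarith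
      ultimately show ?thesis
        using le[of "c\<^sub>0 * (1 + 1 / real (Suc k))"] b by (simp add: psi_pos_eq)
    qed
    then have "p * psi_pos (b / c\<^sub>0) \<le> 1" by (intro LIMSEQ_le_const2[OF lim']) auto
    then show ?thesis using 3 b by (simp add: psi_pos_eq)
  qed
qed

end

section \<open>Conditional expectations\<close>

text \<open>Both conditional expectations equal \<open>g (p X)\<close> with \<open>g z = E \<parallel>z + r Y\<parallel>\<close>, by independence and
  Fubini; \<open>g (p X)\<close> is already measurable for the smaller \<open>\<sigma>\<close>-algebra.\<close>

lemma (in prob_space) nn_cond_exp_norm_add_indep_eq:
  fixes p :: "'x \<Rightarrow> 'h::{real_normed_vector, second_countable_topology}" and r :: "'x \<Rightarrow> 'h"
  assumes ind: "indep_var MX X MY Y"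
    and [measurable]: "p \<in> borel_measurable MX" "r \<in> borel_measurable MY"
    and F: "sigma_finite_subalgebra M F" and F': "sigma_finite_subalgebra M F'"
    and F'_F: "sets F' \<subseteq> sets F" and F_X: "sets F \<subseteq> sets (vimage_algebra (space M) X MX)"
    and pX: "(\<lambda>\<omega>. p (X \<omega>)) \<in> borel_measurable F'"
  shows "AE \<omega> in M. nn_cond_exp M F (\<lambda>\<omega>. ennreal (norm (p (X \<omega>) + r (Y \<omega>)))) \<omega>
                 = nn_cond_exp M F' (\<lambda>\<omega>. ennreal (norm (p (X \<omega>) + r (Y \<omega>)))) \<omega>"
proof -
  have X [measurable]: "X \<in> measurable M MX" and [measurable]: "Y \<in> measurable M MY"
    using ind by (rule indep_var_rv1, rule indep_var_rv2)
  define DX where "DX = distr M MX X"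
  define DY where "DY = distr M MY Y"
  have [measurable_cong]: "sets DX = sets MX" "sets DY = sets MY" by (simp_all add: DX_def DY_def)
  interpret DX: prob_space DX unfolding DX_def by (rule prob_space_distr) simp
  interpret DY: prob_space DY unfolding DY_def by (rule prob_space_distr) simp
  interpret DXY: pair_sigma_finite DX DY by unfold_locales
  define f where "f \<omega> = ennreal (norm (p (X \<omega>) + r (Y \<omega>)))" for \<omega>
  have [measurable]: "f \<in> borel_measurable M" unfolding f_def by measurable
  define g where "g z = (\<integral>\<^sup>+ v. ennreal (norm (z + r v)) \<partial>DY)" for z
  have [measurable]: "g \<in> borel_measurable borel"
    unfolding g_def by (rule DY.borel_measurable_nn_integral) measurable
  have set_nn_integral_eq: "(\<integral>\<^sup>+\<omega>\<in>A. f \<omega> \<partial>M) = (\<integral>\<^sup>+\<omega>\<in>A. g (p (X \<omega>)) \<partial>M)" if A: "A \<in> sets F" for A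
  proof -
    obtain B where B [measurable]: "B \<in> sets MX" "A = X -` B \<inter> space M"
      using A F_X by (auto simp: sets_vimage_algebra2 measurable_space[OF X])
    have "(\<integral>\<^sup>+\<omega>\<in>A. f \<omega> \<partial>M)
        = (\<integral>\<^sup>+z. indicator B (fst z) * ennreal (norm (p (fst z) + r (snd z))) \<partial>distr M (MX \<Otimes>\<^sub>M MY) (\<lambda>\<omega>. (X \<omega>, Y \<omega>)))"
      using B by (subst nn_integral_distr) (auto simp: f_def intro!: nn_integral_cong split: split_indicator)
    also have "distr M (MX \<Otimes>\<^sub>M MY) (\<lambda>\<omega>. (X \<omega>, Y \<omega>)) = DX \<Otimes>\<^sub>M DY"
      using ind unfolding indep_var_distribution_eq DX_def DY_def by simp
    also have "(\<integral>\<^sup>+z. indicator B (fst z) * ennreal (norm (p (fst z) + r (snd z))) \<partial>(DX \<Otimes>\<^sub>M DY))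
        = (\<integral>\<^sup>+x. indicator B x * g (p x) \<partial>DX)"
      by (subst DY.nn_integral_fst[symmetric]) (auto simp: g_def nn_integral_cmult)
    also have "\<dots> = (\<integral>\<^sup>+\<omega>\<in>A. g (p (X \<omega>)) \<partial>M)"
      using B unfolding DX_def by (subst nn_integral_distr) (auto intro!: nn_integral_cong split: split_indicator)
    finally show ?thesis .
  qed
  have gpX': "(\<lambda>\<omega>. g (p (X \<omega>))) \<in> borel_measurable F'" using pX by measurable
  moreover have "subalgebra F F'"
    using F F' F'_F by (auto simp: subalgebra_def sigma_finite_subalgebra_def)
  ultimately have gpX: "(\<lambda>\<omega>. g (p (X \<omega>))) \<in> borel_measurable F"
    by (rule measurable_from_subalg[rotated])
  have "AE \<omega> in M. g (p (X \<omega>)) = nn_cond_exp M F f \<omega>"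
    by (rule sigma_finite_subalgebra.nn_cond_exp_charact[OF F]) (auto simp: set_nn_integral_eq gpX)
  moreover have "AE \<omega> in M. g (p (X \<omega>)) = nn_cond_exp M F' f \<omega>"
    by (rule sigma_finite_subalgebra.nn_cond_exp_charact[OF F']) (use F'_F set_nn_integral_eq gpX' in auto)
  ultimately show ?thesis unfolding f_def by eventually_elim simp
qed

lemma enn2real_abs_diff_le:
  fixes U V V' D D' :: ennreal
  assumes "U \<le> V' + D" "V' \<le> U + D" "V \<le> V' + D'" "V' \<le> V + D'" "D < \<infinity>" "D' < \<infinity>"
  shows "\<bar>enn2real U - enn2real V\<bar> \<le> enn2real D + enn2real D'"
proof (cases "V' = \<infinity>")
  case True
  then have "U = \<infinity>" "V = \<infinity>" using assms by (auto simp: top_unique ennreal_add_eq_top)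
  then show ?thesis by simp
next
  case False
  then have "U < \<infinity>" "V < \<infinity>" "V' < \<infinity>"
    using assms(1,3,5,6) by (auto simp: less_top[symmetric] top_unique ennreal_add_eq_top)
  with assms(5,6) obtain u v v' d d' where "U = ennreal u" "V = ennreal v" "V' = ennreal v'"
      "D = ennreal d" "D' = ennreal d'" "0 \<le> u" "0 \<le> v" "0 \<le> v'" "0 \<le> d" "0 \<le> d'"
    by (metis ennreal_cases less_irrefl top.extremum_strict top_neq_ennreal)
  with assms show ?thesis
    by (simp add: ennreal_plus[symmetric] del: ennreal_plus)
qed

context sigma_finite_subalgebra
begin

lemma nn_cond_exp_le_add:
  assumes [measurable]: "f \<in> borel_measurable M" "g \<in> borel_measurable M" "k \<in> borel_measurable M"
    and "\<And>\<omega>. \<omega> \<in> space M \<Longrightarrow> f \<omega> \<le> g \<omega> + k \<omega>"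
  shows "AE \<omega> in M. nn_cond_exp M F f \<omega> \<le> nn_cond_exp M F g \<omega> + nn_cond_exp M F k \<omega>"
proof -
  have "AE \<omega> in M. nn_cond_exp M F f \<omega> \<le> nn_cond_exp M F (\<lambda>\<omega>. g \<omega> + k \<omega>) \<omega>"
    by (rule nn_cond_exp_mono) (use assms in auto)
  moreover have "AE \<omega> in M. nn_cond_exp M F g \<omega> + nn_cond_exp M F k \<omega> = nn_cond_exp M F (\<lambda>\<omega>. g \<omega> + k \<omega>) \<omega>"
    by (rule nn_cond_exp_sum) auto
  ultimately show ?thesis by eventually_elim simp
qed

lemma real_cond_exp_eq_enn2real_nn_cond_exp:
  assumes "\<And>x. 0 \<le> Y x"
  shows "AE x in M. real_cond_exp M F Y x = enn2real (nn_cond_exp M F (\<lambda>x. ennreal (Y x)) x)"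
proof -
  have "(\<lambda>x. ennreal (- Y x)) = (\<lambda>x. 0)"
    using assms by (auto simp: fun_eq_iff ennreal_eq_0_iff)
  moreover have "AE x in M. 0 = nn_cond_exp M F (\<lambda>x. 0) x"
    by (rule nn_cond_exp_charact) auto
  ultimately have "AE x in M. nn_cond_exp M F (\<lambda>x. ennreal (- Y x)) x = 0" by simp
  then show ?thesis by eventually_elim (simp add: real_cond_exp_def)
qed

lemma AE_nn_cond_exp_less_top:
  assumes "integrable M Y" "\<And>x. 0 \<le> Y x"
  shows "AE x in M. nn_cond_exp M F (\<lambda>x. ennreal (Y x)) x < \<infinity>"
proof -
  have [measurable]: "Y \<in> borel_measurable M" using assms(1) by simp
  have "(\<integral>\<^sup>+x. nn_cond_exp M F (\<lambda>x. ennreal (Y x)) x \<partial>M) = (\<integral>\<^sup>+x. ennreal (Y x) \<partial>M)"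
    using nn_cond_exp_intg[of "\<lambda>_. 1" "\<lambda>x. ennreal (Y x)"] by simp
  also have "\<dots> < \<infinity>" using assms by (simp add: integrable_iff_bounded)
  finally have "AE x in M. nn_cond_exp M F (\<lambda>x. ennreal (Y x)) x \<noteq> \<infinity>"
    by (intro nn_integral_PInf_AE) auto
  then show ?thesis by (simp add: top.not_eq_extremum)
qed

end

lemma real_cond_exp_abs_diff_le:
  assumes F: "sigma_finite_subalgebra M F" and F': "sigma_finite_subalgebra M F'"
    and [measurable]: "Y \<in> borel_measurable M" "Y' \<in> borel_measurable M" "Z \<in> borel_measurable M"
    and nonneg: "\<And>x. 0 \<le> Y x" "\<And>x. 0 \<le> Y' x" "\<And>x. 0 \<le> Z x" and int_Z: "integrable M Z"
    and close: "\<And>x. x \<in> space M \<Longrightarrow> \<bar>Y x - Y' x\<bar> \<le> Z x"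
    and eq: "AE x in M. nn_cond_exp M F (\<lambda>x. ennreal (Y' x)) x = nn_cond_exp M F' (\<lambda>x. ennreal (Y' x)) x"
  shows "AE x in M. \<bar>real_cond_exp M F Y x - real_cond_exp M F' Y x\<bar>
      \<le> real_cond_exp M F Z x + real_cond_exp M F' Z x"
proof -
  have enn_close: "ennreal (Y x) \<le> ennreal (Y' x) + ennreal (Z x)" "ennreal (Y' x) \<le> ennreal (Y x) + ennreal (Z x)"
    if "x \<in> space M" for x
    using close[OF that] nonneg by (auto simp: ennreal_plus[symmetric] intro!: ennreal_leI simp del: ennreal_plus)
  define nn where "nn G f x = nn_cond_exp M G (\<lambda>x. ennreal (f x)) x" for G f x
  have tri: "AE x in M. nn G Y x \<le> nn G Y' x + nn G Z x" "AE x in M. nn G Y' x \<le> nn G Y x + nn G Z x"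
    if "sigma_finite_subalgebra M G" for G
    unfolding nn_def using enn_close
    by (auto intro!: sigma_finite_subalgebra.nn_cond_exp_le_add[OF that])
  have fin: "AE x in M. nn G Z x < \<infinity>" if "sigma_finite_subalgebra M G" for G
    unfolding nn_def using sigma_finite_subalgebra.AE_nn_cond_exp_less_top[OF that int_Z nonneg(3)] .
  have conv: "AE x in M. real_cond_exp M G Y x = enn2real (nn G Y x)"
    "AE x in M. real_cond_exp M G Z x = enn2real (nn G Z x)" if "sigma_finite_subalgebra M G" for G
    unfolding nn_def using nonneg
    by (auto intro!: sigma_finite_subalgebra.real_cond_exp_eq_enn2real_nn_cond_exp[OF that])
  from tri[OF F] tri[OF F'] fin[OF F] fin[OF F'] conv[OF F] conv[OF F'] eq
  show ?thesis
  proof eventually_elim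
    case (elim x)
    have "\<bar>enn2real (nn F Y x) - enn2real (nn F' Y x)\<bar> \<le> enn2real (nn F Z x) + enn2real (nn F' Z x)"
      by (rule enn2real_abs_diff_le[where V'="nn F Y' x"]) (use elim in \<open>auto simp: nn_def\<close>)
    then show ?case using elim by simp
  qed
qed

lemma gen_sigma_space [simp]: "space (gen_sigma M I X) = space M"
  unfolding gen_sigma_def by (rule space_measure_of) auto

lemma sets_gen_sigma:
  "sets (gen_sigma M I X) = sigma_sets (space M) {X j -` A \<inter> space M | j A. j \<in> I \<and> A \<in> sets borel}"
  unfolding gen_sigma_def by (rule sets_measure_of) auto

lemma sets_gen_sigma_subset:
  assumes "\<And>j. j \<in> I \<Longrightarrow> X j \<in> borel_measurable N" "space N = space M"
  shows "sets (gen_sigma M I X) \<subseteq> sets N"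
  unfolding sets_gen_sigma
proof (rule sets.sigma_sets_subset'[of _ N])
  show "{X j -` A \<inter> space M | j A. j \<in> I \<and> A \<in> sets borel} \<subseteq> sets N"
    using assms by (auto simp flip: assms(2) intro!: measurable_sets)
qed (metis assms(2) sets.top)

lemma measurable_gen_sigma:
  fixes X :: "'i \<Rightarrow> 'a \<Rightarrow> 'h::topological_space"
  assumes "j \<in> I"
  shows "X j \<in> borel_measurable (gen_sigma M I X)"
proof (rule measurableI)
  fix A :: "'h set" assume "A \<in> sets borel"
  then show "X j -` A \<inter> space (gen_sigma M I X) \<in> sets (gen_sigma M I X)"
    using assms unfolding sets_gen_sigma by (intro sigma_sets.Basic) auto
qed auto

lemma sets_gen_sigma_mono:
  assumes "I \<subseteq> J"
  shows "sets (gen_sigma M I X) \<subseteq> sets (gen_sigma M J X)"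
  unfolding sets_gen_sigma by (rule sigma_sets_mono') (use assms in blast)

lemma sigma_finite_subalgebra_gen_sigma:
  assumes "finite_measure M" "\<And>j. j \<in> I \<Longrightarrow> X j \<in> borel_measurable M"
  shows "sigma_finite_subalgebra M (gen_sigma M I X)"
proof -
  have "subalgebra M (gen_sigma M I X)"
    unfolding subalgebra_def using sets_gen_sigma_subset[of I X M M] assms by auto
  then have "finite_measure_subalgebra M (gen_sigma M I X)"
    using assms(1) by (simp add: finite_measure_subalgebra_def finite_measure_subalgebra_axioms_def)
  then show ?thesis by (rule finite_measure_subalgebra_is_sigma_finite)
qed

section \<open>Bernoulli shifts\<close>

lemma (in prob_space) distr_reindex_iid_eq_PiM:
  fixes X :: "'k \<Rightarrow> 'a \<Rightarrow> 'b" and \<sigma> :: "'i \<Rightarrow> 'k"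
  assumes ind: "indep_vars (\<lambda>_. N) X UNIV" and meas: "\<And>k. X k \<in> measurable M N"
    and dist: "\<And>k. distr M N (X k) = D" and inj: "inj \<sigma>"
  shows "distr M (PiM UNIV (\<lambda>_. N)) (\<lambda>\<omega> i. X (\<sigma> i) \<omega>) = PiM UNIV (\<lambda>_. D)"
proof -
  have "prob_space D" using dist[of undefined] meas[of undefined] by (metis prob_space_distr)
  then interpret D: product_prob_space "\<lambda>_::'i. D" UNIV
    by (simp add: product_prob_space_def product_sigma_finite_def prob_space_imp_sigma_finite
        product_prob_space_axioms_def)
  have sD: "sets D = sets N" using dist[of undefined] by (metis sets_distr)
  have spD: "space D = space N" using sD by (rule sets_eq_imp_space_eq)
  have mT: "(\<lambda>\<omega> i. X (\<sigma> i) \<omega>) \<in> measurable M (PiM UNIV (\<lambda>_. N))"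
    by (rule measurable_PiM_single') (auto intro: measurable_space[OF meas] meas)
  show ?thesis
  proof (rule D.PiM_eq)
    fix J :: "'i set" and F assume J: "finite J" "J \<subseteq> UNIV" and F: "\<And>j. j \<in> J \<Longrightarrow> F j \<in> sets D"
    have emb: "prod_emb UNIV (\<lambda>_. D) J (Pi\<^sub>E J F) = prod_emb UNIV (\<lambda>_. N) J (Pi\<^sub>E J F)"
      by (simp add: prod_emb_def spD)
    have "prod_emb UNIV (\<lambda>_. N) J (Pi\<^sub>E J F) \<in> sets (PiM UNIV (\<lambda>_. N))"
      using J F sD by (intro sets_PiM_I) auto
    then have "emeasure (distr M (PiM UNIV (\<lambda>_. N)) (\<lambda>\<omega> i. X (\<sigma> i) \<omega>)) (prod_emb UNIV (\<lambda>_. D) J (Pi\<^sub>E J F))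
        = emeasure M {\<omega> \<in> space M. \<forall>j\<in>J. X (\<sigma> j) \<omega> \<in> F j}"
      unfolding emb using meas
      by (subst emeasure_distr[OF mT])
        (auto intro!: arg_cong[where f="emeasure M"] simp: prod_emb_def PiE_iff measurable_space[OF meas])
    also have "\<dots> = (\<Prod>j\<in>J. emeasure D (F j))"
    proof (cases "J = {}")
      case True
      then show ?thesis by (simp add: emeasure_space_1)
    next
      case False
      define A where "A k = F (inv \<sigma> k)" for k
      have "emeasure M {\<omega> \<in> space M. \<forall>j\<in>J. X (\<sigma> j) \<omega> \<in> F j}
          = ennreal (prob (\<Inter>k\<in>\<sigma>`J. X k -` A k \<inter> space M))"
        using False inj by (auto simp: A_def emeasure_eq_measure intro!: arg_cong[where f=prob])
      also have "prob (\<Inter>k\<in>\<sigma>`J. X k -` A k \<inter> space M) = (\<Prod>k\<in>\<sigma>`J. prob (X k -` A k \<inter> space M))"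
        using False J F inj sD by (intro indep_varsD[OF ind]) (auto simp: A_def)
      also have "\<dots> = (\<Prod>j\<in>J. prob (X (\<sigma> j) -` F j \<inter> space M))"
        using inj by (subst prod.reindex) (auto simp: A_def inj_on_def)
      also have "ennreal \<dots> = (\<Prod>j\<in>J. emeasure D (F j))"
      proof -
        have "emeasure D (F j) = ennreal (prob (X (\<sigma> j) -` F j \<inter> space M))" if "j \<in> J" for j
          using F[OF that] sD
          by (subst dist[symmetric, of "\<sigma> j"]) (simp add: emeasure_distr meas emeasure_eq_measure)
        then show ?thesis by (simp add: prod_ennreal measure_nonneg)
      qed
      finally show ?thesis .
    qed
    finally show "emeasure (distr M (PiM UNIV (\<lambda>_. N)) (\<lambda>\<omega> i. X (\<sigma> i) \<omega>)) (prod_emb UNIV (\<lambda>_. D) J (Pi\<^sub>E J F))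
        = (\<Prod>j\<in>J. emeasure D (F j))" .
  qed (simp add: sD cong: sets_PiM_cong)
qed

locale bernoulli_shift = prob_space M
  for M :: "'a measure" and N :: "'b measure" and \<alpha> \<alpha>' :: "int \<Rightarrow> 'a \<Rightarrow> 'b"
    and h :: "(nat \<Rightarrow> 'b) \<Rightarrow> 'h::{real_normed_vector, second_countable_topology}" +
  assumes measurable_\<alpha> [measurable]: "\<And>k. \<alpha> k \<in> measurable M N"
    and measurable_\<alpha>' [measurable]: "\<And>k. \<alpha>' k \<in> measurable M N"
    and indep: "indep_vars (\<lambda>_. N) (\<lambda>k. case k of Inl i \<Rightarrow> \<alpha> i | Inr i \<Rightarrow> \<alpha>' i) UNIV"
    and ident: "\<And>k. distr M N (\<alpha> k) = distr M N (\<alpha> 0)" "\<And>k. distr M N (\<alpha>' k) = distr M N (\<alpha> 0)"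
    and measurable_h [measurable]: "h \<in> borel_measurable (PiM UNIV (\<lambda>_::nat. N))"
begin

definition innov :: "int + int \<Rightarrow> 'a \<Rightarrow> 'b" where
  "innov k = (case k of Inl i \<Rightarrow> \<alpha> i | Inr i \<Rightarrow> \<alpha>' i)"

definition eps :: "nat \<Rightarrow> 'a \<Rightarrow> 'h" where
  "eps j x = h (\<lambda>k. \<alpha> (int j - int k) x)"

text \<open>\<open>eps_cpl L j\<close> is the paper's \<open>\<epsilon>\<^sub>j\<^sup>(\<^sup>L\<^sup>)\<close>: all but the \<open>L\<close> most recent innovations of \<open>\<epsilon>\<^sub>j\<close>
  are replaced by the independent copies \<open>\<alpha>'\<close>.\<close>

definition eps_cpl :: "nat \<Rightarrow> nat \<Rightarrow> 'a \<Rightarrow> 'h" where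
  "eps_cpl L j x = h (\<lambda>k. if k < L then \<alpha> (int j - int k) x else \<alpha>' (int j - int k) x)"

abbreviation past_sigma :: "nat \<Rightarrow> 'a measure" where
  "past_sigma i \<equiv> gen_sigma M {1..i} eps"

lemma measurable_innov [measurable]: "innov k \<in> measurable M N"
  by (simp add: innov_def split: sum.split)

lemma measurable_eps [measurable]: "eps j \<in> borel_measurable M"
proof -
  have "(\<lambda>x k. \<alpha> (int j - int k) x) \<in> measurable M (PiM UNIV (\<lambda>_::nat. N))"
    by (rule measurable_PiM_single') (auto intro: measurable_space[OF measurable_\<alpha>])
  then show ?thesis unfolding eps_def by measurable
qed

lemma measurable_eps_cpl [measurable]: "eps_cpl L j \<in> borel_measurable M"
proof -
  have "(\<lambda>x k. if k < L then \<alpha> (int j - int k) x else \<alpha>' (int j - int k) x) \<in> measurable M (PiM UNIV (\<lambda>_::nat. N))"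
    by (rule measurable_PiM_single') (auto intro: measurable_space[OF measurable_\<alpha>] measurable_space[OF measurable_\<alpha>'])
  then show ?thesis unfolding eps_cpl_def by measurable
qed

lemma sigma_finite_subalgebra_gen_sigma_eps: "sigma_finite_subalgebra M (gen_sigma M I eps)"
  by (rule sigma_finite_subalgebra_gen_sigma) (auto simp: finite_measure_axioms)

definition shifted_innov :: "int \<Rightarrow> 'a \<Rightarrow> nat + nat \<Rightarrow> 'b" where
  "shifted_innov s x k = innov (case k of Inl k \<Rightarrow> Inl (s - int k) | Inr k \<Rightarrow> Inr (s - int k)) x"

lemma measurable_shifted_innov [measurable]: "shifted_innov s \<in> measurable M (PiM UNIV (\<lambda>_. N))"
  unfolding shifted_innov_def by (rule measurable_PiM_single') (auto intro: measurable_space[OF measurable_innov])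

lemma distr_shifted_innov: "distr M (PiM UNIV (\<lambda>_. N)) (shifted_innov s) = PiM UNIV (\<lambda>_. distr M N (\<alpha> 0))"
proof -
  have "inj (\<lambda>k::nat + nat. case k of Inl k \<Rightarrow> Inl (s - int k) | Inr k \<Rightarrow> (Inr (s - int k) :: int + int))"
    by (auto simp: inj_def split: sum.splits)
  moreover have "distr M N (innov k) = distr M N (\<alpha> 0)" for k
    using ident by (simp add: innov_def split: sum.split)
  ultimately show ?thesis
    unfolding shifted_innov_def[abs_def]
    by (intro distr_reindex_iid_eq_PiM) (auto simp: innov_def[abs_def] indep split: sum.split)
qed

definition coupling_diff :: "nat \<Rightarrow> (nat + nat \<Rightarrow> 'b) \<Rightarrow> 'h" where
  "coupling_diff L u = h (\<lambda>k. u (Inl k)) - h (\<lambda>k. if k < L then u (Inl k) else u (Inr k))"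

lemma measurable_coupling_diff [measurable]: "coupling_diff L \<in> borel_measurable (PiM UNIV (\<lambda>_. N))"
proof -
  have "(\<lambda>u k. u (Inl k)) \<in> measurable (PiM UNIV (\<lambda>_::nat+nat. N)) (PiM UNIV (\<lambda>_::nat. N))"
    "(\<lambda>u k. if k < L then u (Inl k) else u (Inr k)) \<in> measurable (PiM UNIV (\<lambda>_::nat+nat. N)) (PiM UNIV (\<lambda>_::nat. N))"
    by (rule measurable_PiM_single'; auto simp: space_PiM PiE_iff)+
  then show ?thesis unfolding coupling_diff_def by measurable
qed

lemma eps_minus_eps_cpl: "eps j x - eps_cpl L j x = coupling_diff L (shifted_innov (int j) x)"
  by (simp add: eps_def eps_cpl_def coupling_diff_def shifted_innov_def innov_def cong: if_cong)

lemma orlicz_norm_eps_minus_eps_cpl: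
  assumes "orlicz_function \<psi>"
  shows "orlicz_norm M \<psi> (\<lambda>x. eps j x - eps_cpl L j x) = orlicz_norm M \<psi> (\<lambda>x. eps L x - eps_cpl L L x)"
proof -
  have "distr M borel (\<lambda>x. coupling_diff L (shifted_innov s x))
      = distr (PiM UNIV (\<lambda>_. distr M N (\<alpha> 0))) borel (coupling_diff L)" for s
    by (subst distr_shifted_innov[symmetric, of s], subst distr_distr) (auto simp: comp_def)
  then show ?thesis unfolding eps_minus_eps_cpl
    by (intro orlicz_function.orlicz_norm_cong_distr[OF assms]) auto
qed

definition past :: "nat \<Rightarrow> (int + int) set" where "past i = Inl ` {..int i}"
definition future :: "nat \<Rightarrow> (int + int) set" where "future i = Inl ` {int i<..} \<union> range Inr"

definition past_innov :: "nat \<Rightarrow> 'a \<Rightarrow> int + int \<Rightarrow> 'b" where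
  "past_innov i x = restrict (\<lambda>k. innov k x) (past i)"
definition future_innov :: "nat \<Rightarrow> 'a \<Rightarrow> int + int \<Rightarrow> 'b" where
  "future_innov i x = restrict (\<lambda>k. innov k x) (future i)"

lemma measurable_past_innov [measurable]: "past_innov i \<in> measurable M (PiM (past i) (\<lambda>_. N))"
  unfolding past_innov_def by (rule measurable_restrict) simp

lemma indep_past_future: "indep_var (PiM (past i) (\<lambda>_. N)) (past_innov i) (PiM (future i) (\<lambda>_. N)) (future_innov i)"
proof -
  define K where "K b = (if b then past i else future i)" for b
  have "indep_vars (\<lambda>b. PiM (K b) (\<lambda>_. N)) (\<lambda>b x. restrict (\<lambda>k. innov k x) (K b)) UNIV"
    using indep unfolding innov_def[abs_def]
    by (intro indep_vars_restrict) (auto simp: K_def past_def future_def disjoint_family_on_def)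
  moreover have "(\<lambda>b. PiM (K b) (\<lambda>_. N)) = case_bool (PiM (past i) (\<lambda>_. N)) (PiM (future i) (\<lambda>_. N))"
    "(\<lambda>b x. restrict (\<lambda>k. innov k x) (K b)) = case_bool (past_innov i) (future_innov i)"
    by (auto simp: K_def past_innov_def future_innov_def fun_eq_iff split: bool.split)
  ultimately show ?thesis unfolding indep_var_def by simp
qed

definition eps_of :: "nat \<Rightarrow> (int + int \<Rightarrow> 'b) \<Rightarrow> 'h" where
  "eps_of j u = h (\<lambda>k. u (Inl (int j - int k)))"

definition eps_cpl_of :: "nat \<Rightarrow> nat \<Rightarrow> (int + int \<Rightarrow> 'b) \<Rightarrow> 'h" where
  "eps_cpl_of L j u = h (\<lambda>k. if k < L then u (Inl (int j - int k)) else u (Inr (int j - int k)))"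

lemma eps_eq_eps_of_past: "j \<le> i \<Longrightarrow> eps j x = eps_of j (past_innov i x)"
  by (simp add: eps_def eps_of_def past_innov_def past_def innov_def)

lemma eps_cpl_eq_eps_cpl_of_future: "eps_cpl (j - i) j x = eps_cpl_of (j - i) j (future_innov i x)"
  by (simp add: eps_cpl_def eps_cpl_of_def future_innov_def future_def innov_def cong: if_cong)

lemma measurable_eps_of: "j \<le> i \<Longrightarrow> eps_of j \<in> borel_measurable (PiM (past i) (\<lambda>_. N))"
proof -
  assume "j \<le> i"
  then have "(\<lambda>u k. u (Inl (int j - int k))) \<in> measurable (PiM (past i) (\<lambda>_. N)) (PiM UNIV (\<lambda>_::nat. N))"
    by (intro measurable_PiM_single') (auto simp: space_PiM PiE_iff past_def)
  then show ?thesis unfolding eps_of_def by measurable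
qed

lemma measurable_eps_cpl_of: "eps_cpl_of (j - i) j \<in> borel_measurable (PiM (future i) (\<lambda>_. N))"
proof -
  have "(\<lambda>u k. if k < j - i then u (Inl (int j - int k)) else u (Inr (int j - int k)))
      \<in> measurable (PiM (future i) (\<lambda>_. N)) (PiM UNIV (\<lambda>_::nat. N))"
  proof (intro measurable_PiM_single')
    fix k
    have "Inl (int j - int k) \<in> future i" if "k < j - i" using that by (auto simp: future_def)
    moreover have "Inr (int j - int k) \<in> future i" by (auto simp: future_def)
    ultimately show "(\<lambda>u. if k < j - i then u (Inl (int j - int k)) else u (Inr (int j - int k)))
        \<in> measurable (PiM (future i) (\<lambda>_. N)) N"
      by (cases "k < j - i") auto
  qed (auto simp: space_PiM PiE_iff future_def)
  then show ?thesis unfolding eps_cpl_of_def by measurable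
qed

lemma sets_past_sigma_subset: "sets (past_sigma i) \<subseteq> sets (vimage_algebra (space M) (past_innov i) (PiM (past i) (\<lambda>_. N)))"
proof (rule sets_gen_sigma_subset)
  fix j assume j: "j \<in> {1..i}"
  have "eps j = (\<lambda>x. eps_of j (past_innov i x))"
    using j by (auto simp: fun_eq_iff eps_eq_eps_of_past)
  also have "\<dots> \<in> borel_measurable (vimage_algebra (space M) (past_innov i) (PiM (past i) (\<lambda>_. N)))"
    using j by (intro measurable_compose[OF measurable_vimage_algebra1 measurable_eps_of])
      (auto intro: measurable_space[OF measurable_past_innov])
  finally show "eps j \<in> borel_measurable (vimage_algebra (space M) (past_innov i) (PiM (past i) (\<lambda>_. N)))" .
qed simp

text \<open>The future innovations are independent of \<open>\<epsilon>\<^sub>1, \<dots>, \<epsilon>\<^sub>i\<close>, so conditioning on \<open>\<epsilon>\<^sub>i\<close> in addition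
  to \<open>\<epsilon>\<^sub>1, \<dots>, \<epsilon>\<^sub>i\<^sub>-\<^sub>1\<close> gives no information about a function of the strict past and of coupled
  future terms.\<close>

lemma nn_cond_exp_past_plus_coupled_eq:
  assumes J: "J \<subseteq> {1..<i}"
  shows "AE x in M. nn_cond_exp M (past_sigma i)
        (\<lambda>x. ennreal (norm ((\<Sum>j\<in>J. a j *\<^sub>R eps j x) + (\<Sum>j\<in>K. b j *\<^sub>R eps_cpl (j - i) j x)))) x
      = nn_cond_exp M (past_sigma (i - 1))
        (\<lambda>x. ennreal (norm ((\<Sum>j\<in>J. a j *\<^sub>R eps j x) + (\<Sum>j\<in>K. b j *\<^sub>R eps_cpl (j - i) j x)))) x"
proof -
  define p where "p u = (\<Sum>j\<in>J. a j *\<^sub>R eps_of j u)" for u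
  define r where "r u = (\<Sum>j\<in>K. b j *\<^sub>R eps_cpl_of (j - i) j u)" for u
  have "p \<in> borel_measurable (PiM (past i) (\<lambda>_. N))"
    using J unfolding p_def by (intro borel_measurable_sum borel_measurable_scaleR measurable_const
        measurable_eps_of) auto
  moreover have "r \<in> borel_measurable (PiM (future i) (\<lambda>_. N))"
    unfolding r_def
    by (intro borel_measurable_sum borel_measurable_scaleR measurable_const measurable_eps_cpl_of) auto
  moreover have p_eq: "(\<lambda>x. p (past_innov i x)) = (\<lambda>x. \<Sum>j\<in>J. a j *\<^sub>R eps j x)"
    using J by (force simp: p_def fun_eq_iff intro!: sum.cong eps_eq_eps_of_past[symmetric])
  moreover have "(\<lambda>x. \<Sum>j\<in>J. a j *\<^sub>R eps j x) \<in> borel_measurable (past_sigma (i - 1))"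
    using J by (intro borel_measurable_sum borel_measurable_scaleR measurable_const measurable_gen_sigma) force+
  ultimately have "AE x in M. nn_cond_exp M (past_sigma i) (\<lambda>x. ennreal (norm (p (past_innov i x) + r (future_innov i x)))) x
      = nn_cond_exp M (past_sigma (i - 1)) (\<lambda>x. ennreal (norm (p (past_innov i x) + r (future_innov i x)))) x"
    by (intro nn_cond_exp_norm_add_indep_eq[OF indep_past_future] sigma_finite_subalgebra_gen_sigma_eps
        sets_gen_sigma_mono sets_past_sigma_subset) auto
  moreover have "r (future_innov i x) = (\<Sum>j\<in>K. b j *\<^sub>R eps_cpl (j - i) j x)" for x
    by (simp add: r_def eps_cpl_eq_eps_cpl_of_future)
  ultimately show ?thesis by (simp add: p_eq[unfolded fun_eq_iff, rule_format])
qed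

lemma nn_integral_psi_coupling_error_le:
  assumes \<psi>: "orlicz_function \<psi>"
    and \<gamma>: "(\<Sum>l. orlicz_norm M \<psi> (\<lambda>x. eps (l + m) x - eps_cpl (l + m) (l + m) x)) \<le> ennreal \<gamma>"
    and W: "\<And>j. j \<in> {i + m..n} \<Longrightarrow> 0 \<le> W j" "\<And>j. j \<in> {i + m..n} \<Longrightarrow> W j \<le> w" "0 \<le> w"
    and c: "0 < c" "w * \<gamma> < c"
  shows "(\<integral>\<^sup>+x. ennreal (\<psi> (norm (\<Sum>j\<in>{i + m..n}. W j *\<^sub>R (eps j x - eps_cpl (j - i) j x)) / c)) \<partial>M) \<le> 1"
proof (rule orlicz_function.nn_integral_psi_weighted_sum_le[OF \<psi>, where U=w and \<Gamma>=\<gamma>])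
  define \<delta> where "\<delta> L = orlicz_norm M \<psi> (\<lambda>x. eps L x - eps_cpl L L x)" for L
  have "(\<Sum>j\<in>{i + m..n}. orlicz_norm M \<psi> (\<lambda>x. eps j x - eps_cpl (j - i) j x))
      = (\<Sum>j\<in>{i + m..n}. \<delta> (j - i))"
    unfolding \<delta>_def by (intro sum.cong refl orlicz_norm_eps_minus_eps_cpl[OF \<psi>])
  also have "\<dots> = (\<Sum>l\<in>(\<lambda>j. j - i - m) ` {i + m..n}. \<delta> (l + m))"
    by (subst sum.reindex) (auto simp: inj_on_def intro!: sum.cong)
  also have "\<dots> \<le> (\<Sum>l. \<delta> (l + m))"
    by (rule sum_le_suminf) auto
  finally show "(\<Sum>j\<in>{i + m..n}. orlicz_norm M \<psi> (\<lambda>x. eps j x - eps_cpl (j - i) j x)) \<le> ennreal \<gamma>"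
    using \<gamma> by (simp add: \<delta>_def)
  show "(\<lambda>x. eps j x - eps_cpl (j - i) j x) \<in> borel_measurable M" for j by measurable
qed (use W c in simp_all)

lemma abs_real_cond_exp_increment_le:
  fixes W :: "nat \<Rightarrow> real"
  assumes i: "i \<in> {1..n}" and m: "1 \<le> m"
  defines "T \<equiv> \<lambda>x. (\<Sum>j=1..n. W j *\<^sub>R eps j x) - (\<Sum>j=i..min (i + m - 1) n. W j *\<^sub>R eps j x)"
    and "E \<equiv> \<lambda>x. norm (\<Sum>j\<in>{i + m..n}. W j *\<^sub>R (eps j x - eps_cpl (j - i) j x))"
  assumes int_E: "integrable M E"
  shows "AE x in M. \<bar>real_cond_exp M (past_sigma i) (\<lambda>x. norm (T x)) x
      - real_cond_exp M (past_sigma (i - 1)) (\<lambda>x. norm (T x)) x\<bar>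
    \<le> real_cond_exp M (past_sigma i) E x + real_cond_exp M (past_sigma (i - 1)) E x"
proof -
  define P where "P x = (\<Sum>j\<in>{1..<i}. W j *\<^sub>R eps j x)" for x
  define R where "R x = (\<Sum>j\<in>{i + m..n}. W j *\<^sub>R eps j x)" for x
  define R' where "R' x = (\<Sum>j\<in>{i + m..n}. W j *\<^sub>R eps_cpl (j - i) j x)" for x
  have T: "T x = P x + R x" for x
  proof -
    have split: "{1..n} = {1..<i} \<union> ({i..min (i + m - 1) n} \<union> {i + m..n})" using i m by auto
    have "(\<Sum>j=1..n. W j *\<^sub>R eps j x)
        = P x + (\<Sum>j\<in>{i..min (i + m - 1) n} \<union> {i + m..n}. W j *\<^sub>R eps j x)"
      unfolding P_def split by (rule sum.union_disjoint) auto
    also have "(\<Sum>j\<in>{i..min (i + m - 1) n} \<union> {i + m..n}. W j *\<^sub>R eps j x)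
        = (\<Sum>j=i..min (i + m - 1) n. W j *\<^sub>R eps j x) + R x"
      unfolding R_def using m by (intro sum.union_disjoint) auto
    finally show ?thesis unfolding T_def by simp
  qed
  have E: "E x = norm (R x - R' x)" for x
    by (simp add: E_def R_def R'_def scaleR_diff_right sum_subtractf)
  show ?thesis
  proof (rule real_cond_exp_abs_diff_le[where Y'="\<lambda>x. norm (P x + R' x)"])
    show "\<bar>norm (T x) - norm (P x + R' x)\<bar> \<le> E x" for x
      using norm_triangle_ineq3[of "T x" "P x + R' x"] by (simp add: T E)
    show "AE x in M. nn_cond_exp M (past_sigma i) (\<lambda>x. ennreal (norm (P x + R' x))) x
        = nn_cond_exp M (past_sigma (i - 1)) (\<lambda>x. ennreal (norm (P x + R' x))) x"
      unfolding P_def R'_def by (rule nn_cond_exp_past_plus_coupled_eq) auto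
    show "(\<lambda>x. norm (T x)) \<in> borel_measurable M" "(\<lambda>x. norm (P x + R' x)) \<in> borel_measurable M"
      "E \<in> borel_measurable M"
      unfolding T_def E_def P_def R'_def by measurable
    show "integrable M E" by (rule int_E)
  qed (simp_all add: E_def sigma_finite_subalgebra_gen_sigma_eps)
qed

lemma measure_sum_increments_gt_psi_le:
  assumes \<psi>: "orlicz_function \<psi>" and m: "1 \<le> m" and a: "0 < a"
    and \<gamma>: "(\<Sum>l. orlicz_norm M \<psi> (\<lambda>x. eps (l + m) x - eps_cpl (l + m) (l + m) x)) \<le> ennreal \<gamma>"
    and W: "\<And>j. j \<in> {1..n} \<Longrightarrow> 0 \<le> W j" "\<And>j. j \<in> {1..n} \<Longrightarrow> W j \<le> w" and w: "0 \<le> w"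
    and c: "0 < c" "w * \<gamma> < c"
  defines "T \<equiv> \<lambda>i x. (\<Sum>j=1..n. W j *\<^sub>R eps j x) - (\<Sum>j=i..min (i + m - 1) n. W j *\<^sub>R eps j x)"
  shows "measure M {x \<in> space M. a < (\<Sum>i=1..n. real_cond_exp M (past_sigma i) (\<lambda>x. norm (T i x)) x
      - real_cond_exp M (past_sigma (i - 1)) (\<lambda>x. norm (T i x)) x)} * \<psi> (a / (2 * real n * c)) \<le> 1"
proof -
  interpret orlicz_function \<psi> by (rule \<psi>)
  define f where "f i x = real_cond_exp M (past_sigma i) (\<lambda>x. norm (T i x)) x
      - real_cond_exp M (past_sigma (i - 1)) (\<lambda>x. norm (T i x)) x" for i x
  define E where "E i x = norm (\<Sum>j\<in>{i + m..n}. W j *\<^sub>R (eps j x - eps_cpl (j - i) j x))" for i x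
  have [measurable]: "E i \<in> borel_measurable M" for i unfolding E_def by measurable
  have E_psi: "(\<integral>\<^sup>+x. ennreal (\<psi> (E i x / c)) \<partial>M) \<le> 1" for i
    unfolding E_def using W m by (intro nn_integral_psi_coupling_error_le[OF \<psi> \<gamma> _ _ w c]) auto
  have E_int: "integrable M (E i)" for i
    by (rule integrable_if_nn_integral_psi_le[OF finite_measure_axioms _ _ c(1) E_psi]) (auto simp: E_def)
  define d where "d k = real_cond_exp M (past_sigma (if snd k then fst k else fst k - 1)) (E (fst k))" for k
  have "AE x in M. \<bar>f i x\<bar> \<le> d (i, True) x + d (i, False) x" if "i \<in> {1..n}" for i
    using abs_real_cond_exp_increment_le[OF that m E_int[of i, unfolded E_def]]
    unfolding f_def T_def d_def E_def by simp
  then have f_bound: "AE x in M. \<forall>i\<in>{1..n}. \<bar>f i x\<bar> \<le> d (i, True) x + d (i, False) x"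
    by (simp add: AE_finite_all)
  define I where "I = {1..n} \<times> (UNIV :: bool set)"
  have "real (card I) = 2 * real n" by (simp add: I_def card_cartesian_product)
  moreover have "measure M {x \<in> space M. a < (\<Sum>i=1..n. f i x)} * \<psi> (a / (real (card I) * c)) \<le> 1"
  proof (rule measure_psi_tail_le[OF prob_space_axioms _ _ a c(1)])
    show "{x \<in> space M. a < (\<Sum>i=1..n. f i x)} \<in> sets M" unfolding f_def T_def by measurable
    show "AE x in M. 0 \<le> d k x" for k
      unfolding d_def E_def
      by (rule sigma_finite_subalgebra.real_cond_exp_pos[OF sigma_finite_subalgebra_gen_sigma_eps]) auto
    show "(\<integral>\<^sup>+x. ennreal (\<psi> (d k x / c)) \<partial>M) \<le> 1" for k
      unfolding d_def using E_psi
      by (intro nn_integral_psi_cond_exp_le[OF prob_space_axioms sigma_finite_subalgebra_gen_sigma_eps _ _ c(1)])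
        (auto simp: E_def)
    show "AE x in M. x \<in> {x \<in> space M. a < (\<Sum>i=1..n. f i x)} \<longrightarrow> a < (\<Sum>k\<in>I. d k x)"
      using f_bound
    proof eventually_elim
      case (elim x)
      have "(\<Sum>i=1..n. f i x) \<le> (\<Sum>i=1..n. \<Sum>b\<in>UNIV. d (i, b) x)"
        using elim by (intro sum_mono) (auto simp: abs_le_iff UNIV_bool add.commute)
      also have "\<dots> = (\<Sum>k\<in>I. d k x)" unfolding I_def by (simp add: sum.cartesian_product)
      finally show ?case by auto
    qed
  qed (auto simp: I_def d_def)
  ultimately show ?thesis by (simp add: f_def)
qed

end

theorem lemma3:
  fixes M :: "'a measure"
    and N :: "'b measure"
    and \<alpha> \<alpha>' :: "int \<Rightarrow> 'a \<Rightarrow> 'b"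
    and h :: "(nat \<Rightarrow> 'b) \<Rightarrow> 'h::{real_inner, complete_space, second_countable_topology}"
    and \<psi> :: "real \<Rightarrow> real"
    and \<gamma> :: "nat \<Rightarrow> real"
    and W :: "nat \<Rightarrow> real"
    and n m :: nat
    and a :: real
    and \<epsilon> \<eta> :: "nat \<Rightarrow> 'a \<Rightarrow> 'h"
    and S :: "'a \<Rightarrow> 'h"
    and T :: "nat \<Rightarrow> 'a \<Rightarrow> 'h"
    and G :: "nat \<Rightarrow> 'a measure"
    and f :: "nat \<Rightarrow> 'a \<Rightarrow> real"
  assumes "prob_space M"
    and \<alpha>_meas: "\<And>k. \<alpha> k \<in> measurable M N" "\<And>k. \<alpha>' k \<in> measurable M N"
    and indep: "prob_space.indep_vars M (\<lambda>_. N)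
                  (\<lambda>k. case k of Inl i \<Rightarrow> \<alpha> i | Inr i \<Rightarrow> \<alpha>' i) UNIV"
    and ident: "\<And>k. distr M N (\<alpha> k) = distr M N (\<alpha> 0)" "\<And>k. distr M N (\<alpha>' k) = distr M N (\<alpha> 0)"
    and h_meas: "h \<in> borel_measurable (PiM UNIV (\<lambda>_::nat. N))"
    and \<psi>_convex: "convex_on {0..} \<psi>"
    and \<psi>_incr: "strict_mono_on {0..} \<psi>"
    and \<psi>0: "\<psi> 0 = 0"
    and \<gamma>_bound: "\<And>m'. m' \<ge> 1 \<Longrightarrow>
        (\<Sum>l. orlicz_norm M \<psi>
           (\<lambda>x. h (\<lambda>k. \<alpha> (int (l + m') - int k) x)
              - h (\<lambda>k. if k < l + m' then \<alpha> (int (l + m') - int k) x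
                       else \<alpha>' (int (l + m') - int k) x))) \<le> ennreal (\<gamma> m')"
    and W_nonneg: "\<And>i. i \<in> {1..n} \<Longrightarrow> W i \<ge> 0"
    and m: "1 \<le> m" "m \<le> n"
    and a: "a > 0"
    and \<epsilon>_def: "\<epsilon> =  (\<lambda>i x. h (\<lambda>k. \<alpha> (int i - int k) x))"
    and \<eta>_def: "\<eta> = (\<lambda>i x. W i *\<^sub>R \<epsilon> i x)"
    and S_def: "S = (\<lambda>x. \<Sum>i=1..n. \<eta> i x)"
    and T_def: "T = (\<lambda>i x. S x - (\<Sum>j=i..min (i + m - 1) n. \<eta> j x))"
    and G_def: "G = (\<lambda>i. gen_sigma M {1..i} \<epsilon>)"
    and f_def: "f = (\<lambda>i x. real_cond_exp M (G i) (\<lambda>y. norm (T i y)) x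
                  - real_cond_exp M (G (i - 1)) (\<lambda>y. norm (T i y)) x)"
  shows "measure M {x \<in> space M. (\<Sum>i=1..n. f i x) > a}
           * \<psi> (a / (2 * real n * Max (W ` {1..n}) * \<gamma> m)) \<le> 2"
proof -
  interpret bernoulli_shift M N \<alpha> \<alpha>' h
    using assms(1) \<alpha>_meas indep ident h_meas by (intro bernoulli_shift.intro bernoulli_shift_axioms.intro) auto
  interpret orlicz_function \<psi> using \<psi>_convex \<psi>_incr \<psi>0 by (rule orlicz_function.intro)
  have \<epsilon>_eq: "\<epsilon> = eps" unfolding \<epsilon>_def by (simp add: fun_eq_iff eps_def)
  have \<gamma>: "(\<Sum>l. orlicz_norm M \<psi> (\<lambda>x. eps (l + m) x - eps_cpl (l + m) (l + m) x)) \<le> ennreal (\<gamma> m)"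
    using \<gamma>_bound[OF m(1)] by (simp add: eps_def eps_cpl_def)
  define w where "w = Max (W ` {1..n})"
  have W_le: "W j \<le> w" if "j \<in> {1..n}" for j using that by (simp add: w_def)
  have w: "0 \<le> w" using W_le[of 1] W_nonneg[of 1] m by auto
  define A where "A = {x \<in> space M. a < (\<Sum>i=1..n. f i x)}"
  have bound: "measure M A * \<psi> (a / (2 * real n) / c) \<le> 1" if "0 < c" "w * \<gamma> m < c" for c
    using measure_sum_increments_gt_psi_le[OF orlicz_function_axioms m(1) a \<gamma> W_nonneg W_le w that]
    unfolding A_def f_def T_def S_def \<eta>_def G_def \<epsilon>_eq by (simp add: divide_divide_eq_left)
  have "measure M A * \<psi> (a / (2 * real n) / (w * \<gamma> m)) \<le> 1"
    by (rule mult_psi_le_one_at_threshold[OF measure_nonneg _ bound]) (use a m in simp_all)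
  then show ?thesis by (simp add: A_def w_def mult.assoc)
qed

end
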